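(* Let $A\in\mathbb{R}^{m\times n}$ with $m\ge n$ and with nonzero rows $a_1^\top,\dots,a_m^\top$, let $x\in\mathbb{R}^n$ and $b:=Ax$. Fix $l\in\{1,\dots,n\}$, let $\sigma_l$ be the $l$-th largest singular value of $A$, $v_l$ an associated right singular vector, and $\eta_l:=\sigma_l^2/\|A\|_F^2$. Let $M\in[0,1]$ with $0\le M\le(1-\sqrt{\eta_l})^2$ and set $\beta=1-\frac{\eta_l}{(1-\sqrt M)^2}$, and assume $\beta\in[0,1)$. Given $x_0\in\mathbb{R}^n$ and $y_0=0$, define for $k\ge0$ $$x_{k+1}=x_k+\frac{b_{i_k}-\langle x_k,a_{i_k}\rangle}{\|a_{i_k}\|_2^2}a_{i_k}+My_k,\qquad y_{k+1}=\beta y_k+(1-\beta)(x_{k+1}-x_k),$$ with $i_0,i_1,\dots$ independent and $\mathbb{P}(i_k=i)=\|a_i\|_2^2/\|A\|_F^2$. Then for all $k\ge0$, $$\mathbb{E}\langle x_{k+1}-x,v_l\rangle=\left(1-\frac{\eta_l}{1-\sqrt M}\right)^k\left(1+\eta_l\frac{\sqrt M(k+1)-1}{1-\sqrt M}\right)\langle x_0-x,v_l\rangle .$$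
   Context: $\|\cdot\|_2$ is the Euclidean norm, $\|A\|_F$ the Frobenius norm, $b_i$ the $i$-th entry of $b$; expectation is over the random indices. *)

theory Defs
  imports "HOL-Analysis.Analysis" "HOL-Probability.Probability"
begin

definition frobenius_norm :: "real^'n^'m \<Rightarrow> real" where
  "frobenius_norm A = sqrt (\<Sum>i\<in>UNIV. \<Sum>j\<in>UNIV. (A $ i $ j)^2)"

definition svd_right :: "real^'n^'m \<Rightarrow> (nat \<Rightarrow> real) \<Rightarrow> (nat \<Rightarrow> real^'n) \<Rightarrow> bool" where
  "svd_right A \<sigma> V \<longleftrightarrow>
     (\<forall>j\<in>{1..CARD('n)}. \<sigma> j \<ge> 0 \<and> norm (V j) = 1 \<and>
          (transpose A ** A) *v V j = ((\<sigma> j)^2) *\<^sub>R V j) \<and>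
     (\<forall>i\<in>{1..CARD('n)}. \<forall>j\<in>{1..CARD('n)}. i \<noteq> j \<longrightarrow> inner (V i) (V j) = 0) \<and>
     (\<forall>i j. 1 \<le> i \<longrightarrow> i \<le> j \<longrightarrow> j \<le> CARD('n) \<longrightarrow> \<sigma> j \<le> \<sigma> i)"

fun kacz_mom :: "real^'n^'m \<Rightarrow> real^'m \<Rightarrow> real \<Rightarrow> real \<Rightarrow> real^'n \<Rightarrow> (nat \<Rightarrow> 'm)
                  \<Rightarrow> nat \<Rightarrow> (real^'n) \<times> (real^'n)" where
  "kacz_mom A b M \<beta> x0 idx 0 = (x0, 0)"
| "kacz_mom A b M \<beta> x0 idx (Suc k) =
     (let (xk, yk) = kacz_mom A b M \<beta> x0 idx k;
          i = idx k;
          xk1 = xk + ((b $ i - inner xk (A $ i)) / (norm (A $ i))^2) *\<^sub>R (A $ i) + M *\<^sub>R yk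
      in (xk1, \<beta> *\<^sub>R yk + (1 - \<beta>) *\<^sub>R (xk1 - xk)))"

end

theory Submission
  imports Defs
begin

text \<open>Write U k and W k for the expectations of the components of x_k - x and y_k along the
  singular vector v = V l.  The iterate after k steps depends only on the indices i_0, ..., i_(k-1),
  so averaging the projection step over the independent index i_k replaces it by
  -(A^T A (x_k - x)) / norm(A)_F^2; as v is an eigenvector of A^T A this gives
  U (k+1) = (1 - eta) U k + M W k, and linearity gives W (k+1) = beta W k + (1 - beta) (U (k+1) - U k).
  Eliminating W leaves U (k+2) = 2 r U (k+1) - r^2 U k with the double root r = 1 - eta / (1 - sqrt M),
  and solving it with U 1 = (1 - eta) U 0 gives the closed form.  Independence is used in discrete
  form: a function of finitely many indices is a finite combination of indicators of cylinder
  events, whose probabilities factor.\<close>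

definition determined_by :: "'i set \<Rightarrow> (('i \<Rightarrow> 'a) \<Rightarrow> 'b) \<Rightarrow> bool" where
  "determined_by J F \<longleftrightarrow> (\<forall>s t. (\<forall>j\<in>J. s j = t j) \<longrightarrow> F s = F t)"

lemma determined_by_insert:
  assumes "\<And>i. determined_by J (\<lambda>s. H s i)"
  shows "determined_by (insert k J) (\<lambda>s. H s (s k))"
  using assms unfolding determined_by_def by (metis insert_iff)

lemma determined_by_eq_sum_PiE:
  fixes F :: "('i \<Rightarrow> 'a::finite) \<Rightarrow> 'b::comm_ring_1"
  assumes "finite J" "determined_by J F"
  shows "F s = (\<Sum>t\<in>PiE J (\<lambda>_. UNIV). of_bool (\<forall>j\<in>J. s j = t j) * F t)"
proof -
  have "of_bool (\<forall>j\<in>J. s j = t j) * F t = (if t = restrict s J then F t else 0)"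
    if "t \<in> PiE J (\<lambda>_. UNIV)" for t
    using that by (auto simp: PiE_def extensional_def fun_eq_iff)
  then have "(\<Sum>t\<in>PiE J (\<lambda>_. UNIV). of_bool (\<forall>j\<in>J. s j = t j) * F t) = F (restrict s J)"
    using assms(1) by (simp add: finite_PiE cong: sum.cong)
  also have "\<dots> = F s"
    using assms(2) unfolding determined_by_def by simp
  finally show ?thesis ..
qed

locale iid_indices = prob_space P
  for P :: "'w measure" and I :: "nat \<Rightarrow> 'w \<Rightarrow> 'm::finite" and q :: "'m \<Rightarrow> real" +
  assumes indep_indices: "indep_vars (\<lambda>_. count_space UNIV) I UNIV"
    and prob_index_eq: "\<And>k i. prob {\<omega> \<in> space P. I k \<omega> = i} = q i"
begin

definition cylinder :: "nat set \<Rightarrow> (nat \<Rightarrow> 'm) \<Rightarrow> 'w set" where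
  "cylinder J t = {\<omega> \<in> space P. \<forall>j\<in>J. I j \<omega> = t j}"

lemma cylinder_in_events: "finite J \<Longrightarrow> cylinder J t \<in> events"
proof -
  have "I j \<in> measurable P (count_space UNIV)" for j
    using indep_indices unfolding indep_vars_def2 by auto
  then have "I j -` {t j} \<inter> space P \<in> events" for j
    by (simp add: measurable_count_space_eq2_countable)
  moreover have "I j -` {t j} \<inter> space P = {\<omega> \<in> space P. I j \<omega> = t j}" for j
    by auto
  ultimately have "{\<omega> \<in> space P. I j \<omega> = t j} \<in> events" for j
    by simp
  then show "finite J \<Longrightarrow> cylinder J t \<in> events"
    unfolding cylinder_def by (intro sets.sets_Collect_finite_All) auto
qed

lemma prob_cylinder:
  assumes "finite J"
  shows "prob (cylinder J t) = (\<Prod>j\<in>J. q (t j))"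
proof (cases "J = {}")
  case True
  then show ?thesis by (simp add: cylinder_def prob_space)
next
  case False
  have "indep_sets (\<lambda>j. {I j -` A \<inter> space P | A. A \<in> sets (count_space UNIV)}) UNIV"
    using indep_indices unfolding indep_vars_def2 by auto
  then have "prob (\<Inter>j\<in>J. I j -` {t j} \<inter> space P) = (\<Prod>j\<in>J. prob (I j -` {t j} \<inter> space P))"
    by (rule indep_setsD) (use False assms in auto)
  moreover have "(\<Inter>j\<in>J. I j -` {t j} \<inter> space P) = cylinder J t"
    using False by (auto simp: cylinder_def)
  moreover have "I j -` {t j} \<inter> space P = {\<omega> \<in> space P. I j \<omega> = t j}" for j
    by auto
  ultimately show ?thesis
    by (simp add: prob_index_eq)
qed

lemma determined_eq_sum_cylinders:
  fixes F :: "(nat \<Rightarrow> 'm) \<Rightarrow> real"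
  assumes "finite J" "determined_by J F" "\<omega> \<in> space P"
  shows "F (\<lambda>j. I j \<omega>) = (\<Sum>t\<in>PiE J (\<lambda>_. UNIV). F t * indicator (cylinder J t) \<omega>)"
  using assms by (subst determined_by_eq_sum_PiE[OF assms(1,2)])
    (auto simp: cylinder_def indicator_def intro!: sum.cong)

lemma integrable_determined:
  fixes F :: "(nat \<Rightarrow> 'm) \<Rightarrow> real"
  assumes "finite J" "determined_by J F"
  shows "integrable P (\<lambda>\<omega>. F (\<lambda>j. I j \<omega>))"
proof -
  have "integrable P (\<lambda>\<omega>. \<Sum>t\<in>PiE J (\<lambda>_. UNIV). F t * indicator (cylinder J t) \<omega>)"
    using cylinder_in_events[OF assms(1)]
    by (intro Bochner_Integration.integrable_sum integrable_mult_right integrable_real_indicator)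
      (auto simp: less_top[symmetric])
  then show ?thesis
    by (rule Bochner_Integration.integrable_cong[THEN iffD1, OF refl, rotated])
      (simp add: determined_eq_sum_cylinders[OF assms])
qed

lemma expectation_determined_mult_indicator:
  fixes F :: "(nat \<Rightarrow> 'm) \<Rightarrow> real"
  assumes "finite J" "determined_by J F" "B \<in> events"
  shows "expectation (\<lambda>\<omega>. F (\<lambda>j. I j \<omega>) * indicator B \<omega>)
       = (\<Sum>t\<in>PiE J (\<lambda>_. UNIV). F t * prob (cylinder J t \<inter> B))"
proof -
  have "expectation (\<lambda>\<omega>. F (\<lambda>j. I j \<omega>) * indicator B \<omega>)
      = expectation (\<lambda>\<omega>. \<Sum>t\<in>PiE J (\<lambda>_. UNIV). F t * indicator (cylinder J t \<inter> B) \<omega>)"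
    by (intro Bochner_Integration.integral_cong)
      (auto simp: determined_eq_sum_cylinders[OF assms(1,2)] sum_distrib_right indicator_inter_arith mult.assoc)
  also have "\<dots> = (\<Sum>t\<in>PiE J (\<lambda>_. UNIV). F t * prob (cylinder J t \<inter> B))"
  proof (subst Bochner_Integration.integral_sum)
    show "integrable P (\<lambda>\<omega>. F t * indicator (cylinder J t \<inter> B) \<omega>)" for t
      using cylinder_in_events[OF assms(1)] assms(3)
      by (intro integrable_mult_right integrable_real_indicator) (auto simp: less_top[symmetric])
    show "(\<Sum>t\<in>PiE J (\<lambda>_. UNIV). expectation (\<lambda>\<omega>. F t * indicator (cylinder J t \<inter> B) \<omega>))
        = (\<Sum>t\<in>PiE J (\<lambda>_. UNIV). F t * prob (cylinder J t \<inter> B))"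
      using sets.sets_into_space[OF assms(3)] by (simp add: cylinder_def Int_absorb2 Int_assoc)
  qed
  finally show ?thesis .
qed

lemma expectation_determined:
  fixes F :: "(nat \<Rightarrow> 'm) \<Rightarrow> real"
  assumes "finite J" "determined_by J F"
  shows "expectation (\<lambda>\<omega>. F (\<lambda>j. I j \<omega>)) = (\<Sum>t\<in>PiE J (\<lambda>_. UNIV). F t * prob (cylinder J t))"
proof -
  have "cylinder J t \<inter> space P = cylinder J t" for t
    by (auto simp: cylinder_def)
  then show ?thesis
    using expectation_determined_mult_indicator[OF assms sets.top]
    by (simp add: indicator_def cong: Bochner_Integration.integral_cong)
qed

lemma expectation_fresh_index:
  fixes H :: "(nat \<Rightarrow> 'm) \<Rightarrow> 'm \<Rightarrow> real"
  assumes J: "finite J" "k \<notin> J" and H: "\<And>i. determined_by J (\<lambda>s. H s i)"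
  shows "expectation (\<lambda>\<omega>. H (\<lambda>j. I j \<omega>) (I k \<omega>))
       = (\<Sum>i\<in>UNIV. q i * expectation (\<lambda>\<omega>. H (\<lambda>j. I j \<omega>) i))"
proof -
  define B where "B i = cylinder {k} (\<lambda>_. i)" for i
  have B: "B i \<in> events" for i
    unfolding B_def by (rule cylinder_in_events) simp
  have "expectation (\<lambda>\<omega>. H (\<lambda>j. I j \<omega>) (I k \<omega>))
      = expectation (\<lambda>\<omega>. \<Sum>i\<in>UNIV. H (\<lambda>j. I j \<omega>) i * indicator (B i) \<omega>)"
    by (intro Bochner_Integration.integral_cong) (simp_all add: B_def cylinder_def indicator_def)
  also have "\<dots> = (\<Sum>i\<in>UNIV. expectation (\<lambda>\<omega>. H (\<lambda>j. I j \<omega>) i * indicator (B i) \<omega>))"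
    by (intro Bochner_Integration.integral_sum integrable_real_mult_indicator B integrable_determined[OF J(1) H])
  also have "\<dots> = (\<Sum>i\<in>UNIV. q i * expectation (\<lambda>\<omega>. H (\<lambda>j. I j \<omega>) i))"
  proof (rule sum.cong[OF refl])
    fix i
    have "prob (cylinder J t \<inter> B i) = q i * prob (cylinder J t)" for t
    proof -
      have "cylinder J t \<inter> B i = cylinder (insert k J) (t(k := i))"
        using J(2) by (auto simp: cylinder_def B_def)
      moreover have "(\<Prod>j\<in>J. q ((t(k := i)) j)) = (\<Prod>j\<in>J. q (t j))"
        using J(2) by (intro prod.cong) auto
      ultimately show ?thesis
        using J by (simp add: prob_cylinder)
    qed
    then show "expectation (\<lambda>\<omega>. H (\<lambda>j. I j \<omega>) i * indicator (B i) \<omega>)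
        = q i * expectation (\<lambda>\<omega>. H (\<lambda>j. I j \<omega>) i)"
      using expectation_determined_mult_indicator[OF J(1) H B] expectation_determined[OF J(1) H]
      by (simp add: sum_distrib_left mult_ac)
  qed
  finally show ?thesis .
qed

end

declare kacz_mom.simps(2) [simp del]

lemma fst_kacz_mom_Suc:
  "fst (kacz_mom A b M \<beta> x0 s (Suc k))
   = fst (kacz_mom A b M \<beta> x0 s k)
     + ((b $ s k - inner (fst (kacz_mom A b M \<beta> x0 s k)) (A $ s k)) / (norm (A $ s k))^2) *\<^sub>R A $ s k
     + M *\<^sub>R snd (kacz_mom A b M \<beta> x0 s k)"
  by (simp add: kacz_mom.simps(2) Let_def split_beta)

lemma snd_kacz_mom_Suc:
  "snd (kacz_mom A b M \<beta> x0 s (Suc k))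
   = \<beta> *\<^sub>R snd (kacz_mom A b M \<beta> x0 s k)
     + (1 - \<beta>) *\<^sub>R (fst (kacz_mom A b M \<beta> x0 s (Suc k)) - fst (kacz_mom A b M \<beta> x0 s k))"
  by (simp add: kacz_mom.simps(2) Let_def split_beta)

lemma determined_by_kacz_mom: "determined_by {..<k} (\<lambda>s. G (kacz_mom A b M \<beta> x0 s k))"
proof -
  have "(\<forall>j<k. s j = t j) \<Longrightarrow> kacz_mom A b M \<beta> x0 s k = kacz_mom A b M \<beta> x0 t k" for s t
    by (induction k) (auto simp: kacz_mom.simps(2) Let_def split_beta)
  then show ?thesis
    unfolding determined_by_def by (metis lessThan_iff)
qed

lemma sum_inner_rows:
  fixes A :: "real^'n^'m"
  shows "(\<Sum>i\<in>UNIV. inner z (A $ i) * inner (A $ i) w) = inner z ((transpose A ** A) *v w)"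
proof -
  have "inner z ((transpose A ** A) *v w) = inner ((A *v w) v* A) z"
    by (simp add: matrix_vector_mul_assoc[symmetric] inner_commute)
  also have "\<dots> = inner (A *v w) (A *v z)"
    by (rule dot_lmul_matrix)
  finally show ?thesis
    by (simp add: inner_vec_def matrix_vector_mul_component mult.commute inner_commute)
qed

lemma inner_fst_kacz_mom_Suc:
  fixes A :: "real^'n^'m"
  shows "inner (fst (kacz_mom A (A *v x) M \<beta> x0 s (Suc k)) - x) v
   = inner (fst (kacz_mom A (A *v x) M \<beta> x0 s k) - x) v
     - inner (fst (kacz_mom A (A *v x) M \<beta> x0 s k) - x) (A $ s k) * inner (A $ s k) v / (norm (A $ s k))^2
     + M * inner (snd (kacz_mom A (A *v x) M \<beta> x0 s k)) v"
proof -
  define X where "X = fst (kacz_mom A (A *v x) M \<beta> x0 s k)"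
  have "(A *v x) $ s k - inner X (A $ s k) = - inner (X - x) (A $ s k)"
    by (simp add: matrix_vector_mul_component inner_diff_left inner_commute)
  then show ?thesis
    unfolding fst_kacz_mom_Suc X_def[symmetric]
    by (simp add: algebra_simps flip: add_divide_distrib)
qed

context iid_indices
begin

lemma integrable_kacz_mom:
  fixes G :: "(real^'n) \<times> (real^'n) \<Rightarrow> real"
  shows "integrable P (\<lambda>\<omega>. G (kacz_mom A b M \<beta> x0 (\<lambda>j. I j \<omega>) k))"
  by (rule integrable_determined[OF finite_lessThan determined_by_kacz_mom])

lemma expectation_inner_fst_kacz_mom_Suc:
  fixes A :: "real^'n^'m"
  assumes q: "\<And>i. q i = (norm (A $ i))^2 / c" and v: "(transpose A ** A) *v v = \<mu> *\<^sub>R v"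
  shows "expectation (\<lambda>\<omega>. inner (fst (kacz_mom A (A *v x) M \<beta> x0 (\<lambda>j. I j \<omega>) (Suc k)) - x) v)
       = (1 - \<mu> / c) * expectation (\<lambda>\<omega>. inner (fst (kacz_mom A (A *v x) M \<beta> x0 (\<lambda>j. I j \<omega>) k) - x) v)
         + M * expectation (\<lambda>\<omega>. inner (snd (kacz_mom A (A *v x) M \<beta> x0 (\<lambda>j. I j \<omega>) k)) v)"
proof -
  define E where "E s = inner (fst (kacz_mom A (A *v x) M \<beta> x0 s k) - x) v" for s
  define Y where "Y s = inner (snd (kacz_mom A (A *v x) M \<beta> x0 s k)) v" for s
  define H where "H s i = inner (fst (kacz_mom A (A *v x) M \<beta> x0 s k) - x) (A $ i) * inner (A $ i) v
    / (norm (A $ i))^2" for s i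
  have det: "determined_by {..<k} E" "determined_by {..<k} Y" "\<And>i. determined_by {..<k} (\<lambda>s. H s i)"
    unfolding E_def Y_def H_def by (rule determined_by_kacz_mom)+
  have averaged_step: "(\<Sum>i\<in>UNIV. q i * H s i) = \<mu> / c * E s" for s
  proof -
    \<comment> \<open>a zero row has q i = 0, so the junk division by its norm does no harm\<close>
    have "q i * H s i = inner (fst (kacz_mom A (A *v x) M \<beta> x0 s k) - x) (A $ i) * inner (A $ i) v / c" for i
      by (cases "A $ i = 0") (simp_all add: q H_def)
    then show ?thesis
      by (simp add: sum_divide_distrib[symmetric] sum_inner_rows v E_def)
  qed
  have "expectation (\<lambda>\<omega>. H (\<lambda>j. I j \<omega>) (I k \<omega>))
      = (\<Sum>i\<in>UNIV. q i * expectation (\<lambda>\<omega>. H (\<lambda>j. I j \<omega>) i))"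
    by (rule expectation_fresh_index[OF finite_lessThan _ det(3)]) simp
  also have "\<dots> = expectation (\<lambda>\<omega>. \<Sum>i\<in>UNIV. q i * H (\<lambda>j. I j \<omega>) i)"
    using integrable_determined[OF finite_lessThan det(3)] by (simp add: Bochner_Integration.integral_sum)
  also have "\<dots> = expectation (\<lambda>\<omega>. \<mu> / c * E (\<lambda>j. I j \<omega>))"
    by (simp only: averaged_step)
  finally have EH: "expectation (\<lambda>\<omega>. H (\<lambda>j. I j \<omega>) (I k \<omega>))
      = \<mu> / c * expectation (\<lambda>\<omega>. E (\<lambda>j. I j \<omega>))"
    by simp
  have "determined_by {..<Suc k} (\<lambda>s. H s (s k))"
    using determined_by_insert[OF det(3)] by (simp add: lessThan_Suc)
  then have "integrable P (\<lambda>\<omega>. H (\<lambda>j. I j \<omega>) (I k \<omega>))"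
    by (rule integrable_determined[OF finite_lessThan])
  moreover have "inner (fst (kacz_mom A (A *v x) M \<beta> x0 (\<lambda>j. I j \<omega>) (Suc k)) - x) v
      = E (\<lambda>j. I j \<omega>) - H (\<lambda>j. I j \<omega>) (I k \<omega>) + M * Y (\<lambda>j. I j \<omega>)" for \<omega>
    unfolding E_def H_def Y_def by (rule inner_fst_kacz_mom_Suc)
  ultimately have "expectation (\<lambda>\<omega>. inner (fst (kacz_mom A (A *v x) M \<beta> x0 (\<lambda>j. I j \<omega>) (Suc k)) - x) v)
      = expectation (\<lambda>\<omega>. E (\<lambda>j. I j \<omega>)) - expectation (\<lambda>\<omega>. H (\<lambda>j. I j \<omega>) (I k \<omega>))
        + M * expectation (\<lambda>\<omega>. Y (\<lambda>j. I j \<omega>))"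
    using integrable_determined[OF finite_lessThan det(1)] integrable_determined[OF finite_lessThan det(2)]
    by simp
  then show ?thesis
    unfolding EH by (simp add: E_def Y_def algebra_simps)
qed

lemma expectation_inner_snd_kacz_mom_Suc:
  "expectation (\<lambda>\<omega>. inner (snd (kacz_mom A b M \<beta> x0 (\<lambda>j. I j \<omega>) (Suc k))) v)
   = \<beta> * expectation (\<lambda>\<omega>. inner (snd (kacz_mom A b M \<beta> x0 (\<lambda>j. I j \<omega>) k)) v)
     + (1 - \<beta>) * (expectation (\<lambda>\<omega>. inner (fst (kacz_mom A b M \<beta> x0 (\<lambda>j. I j \<omega>) (Suc k)) - x) v)
                  - expectation (\<lambda>\<omega>. inner (fst (kacz_mom A b M \<beta> x0 (\<lambda>j. I j \<omega>) k) - x) v))"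
proof -
  have "inner (snd (kacz_mom A b M \<beta> x0 s (Suc k))) v
      = \<beta> * inner (snd (kacz_mom A b M \<beta> x0 s k)) v
        + (1 - \<beta>) * (inner (fst (kacz_mom A b M \<beta> x0 s (Suc k)) - x) v
                     - inner (fst (kacz_mom A b M \<beta> x0 s k) - x) v)" for s
    unfolding snd_kacz_mom_Suc[of A b M \<beta> x0 s k] by (simp add: inner_add_left inner_diff_left)
  then show ?thesis
    using integrable_kacz_mom[where G = "\<lambda>X. inner (snd X) v"]
      integrable_kacz_mom[where G = "\<lambda>X. inner (fst X - x) v"]
    by simp
qed

end

lemma double_root_recurrence:
  fixes u :: "nat \<Rightarrow> 'a::comm_ring_1"
  assumes rec: "\<And>k. u (Suc (Suc k)) = 2 * r * u (Suc k) - r^2 * u k"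
  shows "u (Suc k) = r^k * (of_nat (k + 1) * u 1 - of_nat k * r * u 0)"
proof (induction k rule: less_induct)
  case (less k)
  consider "k = 0" | "k = 1" | j where "k = Suc (Suc j)"
    by (metis One_nat_def not0_implies_Suc)
  then show ?case
  proof cases
    case 3
    have IH: "u (Suc j) = r^j * (of_nat (j + 1) * u 1 - of_nat j * r * u 0)"
      "u (Suc (Suc j)) = r^(Suc j) * (of_nat (j + 2) * u 1 - of_nat (j + 1) * r * u 0)"
      using less[of j] less[of "Suc j"] 3 by simp_all
    have "u (Suc k) = 2 * r * u (Suc (Suc j)) - r^2 * u (Suc j)"
      using rec 3 by simp
    also have "\<dots> = r^k * (of_nat (k + 1) * u 1 - of_nat k * r * u 0)"
      unfolding IH 3 by (simp add: algebra_simps power2_eq_square)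
    finally show ?thesis .
  qed (use rec[of 0] in \<open>simp_all add: algebra_simps power2_eq_square\<close>)
qed

lemma momentum_recurrence_closed_form:
  fixes U W :: "nat \<Rightarrow> real" and \<eta> \<beta> m :: real
  assumes U: "\<And>k. U (Suc k) = (1 - \<eta>) * U k + m^2 * W k"
    and W: "\<And>k. W (Suc k) = \<beta> * W k + (1 - \<beta>) * (U (Suc k) - U k)"
    and W0: "W 0 = 0" and \<beta>: "\<beta> = 1 - \<eta> / (1 - m)^2" and m: "m \<noteq> 1"
  shows "U (Suc k) = (1 - \<eta> / (1 - m))^k * (1 + \<eta> * (m * real (k + 1) - 1) / (1 - m)) * U 0"
proof -
  define r where "r = 1 - \<eta> / (1 - m)"
  have m': "1 - m \<noteq> 0"
    using m by simp
  have "U (Suc (Suc k)) = 2 * r * U (Suc k) - r^2 * U k" for k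
  proof -
    have "U (Suc (Suc k)) = (1 - \<eta>) * U (Suc k) + \<beta> * (m^2 * W k) + m^2 * (1 - \<beta>) * (U (Suc k) - U k)"
      using U[of "Suc k"] W[of k] by (simp add: algebra_simps)
    also have "m^2 * W k = U (Suc k) - (1 - \<eta>) * U k"
      using U[of k] by simp
    finally have "U (Suc (Suc k))
        = (1 - \<eta> + \<beta> + m^2 * (1 - \<beta>)) * U (Suc k) - (\<beta> * (1 - \<eta>) + m^2 * (1 - \<beta>)) * U k"
      by (simp add: algebra_simps)
    moreover have "1 - \<eta> + \<beta> + m^2 * (1 - \<beta>) = 2 * r" "\<beta> * (1 - \<eta>) + m^2 * (1 - \<beta>) = r^2"
      unfolding r_def \<beta> using m' by (simp_all add: field_simps) (simp_all add: algebra_simps power2_eq_square)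
    ultimately show ?thesis
      by simp
  qed
  then have "U (Suc k) = r^k * (of_nat (k + 1) * U 1 - of_nat k * r * U 0)"
    by (rule double_root_recurrence)
  also have "U 1 = (1 - \<eta>) * U 0"
    using U[of 0] W0 by simp
  also have "r^k * (of_nat (k + 1) * ((1 - \<eta>) * U 0) - of_nat k * r * U 0)
      = r^k * (of_nat (k + 1) * (1 - \<eta>) - of_nat k * r) * U 0"
    by (simp add: algebra_simps)
  also have "of_nat (k + 1) * (1 - \<eta>) - of_nat k * r = 1 + \<eta> * (m * real (k + 1) - 1) / (1 - m)"
    unfolding r_def using m' by (simp add: field_simps)
  finally show ?thesis
    by (simp add: r_def)
qed

theorem corollary1p4:
  fixes A :: "real^'n^'m" and x x0 :: "real^'n" and b :: "real^'m"
    and \<sigma> :: "nat \<Rightarrow> real" and V :: "nat \<Rightarrow> real^'n"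
    and l :: nat and \<eta> M \<beta> :: real
    and P :: "'w measure" and I :: "nat \<Rightarrow> 'w \<Rightarrow> 'm"
  assumes mn: "CARD('m) \<ge> CARD('n)"
    and rows: "\<forall>i. A $ i \<noteq> 0"
    and b_def: "b = A *v x"
    and svd: "svd_right A \<sigma> V"
    and l: "l \<in> {1..CARD('n)}"
    and eta: "\<eta> = (\<sigma> l)^2 / (frobenius_norm A)^2"
    and M: "0 \<le> M" "M \<le> 1" "M \<le> (1 - sqrt \<eta>)^2"
    and beta: "\<beta> = 1 - \<eta> / (1 - sqrt M)^2" "0 \<le> \<beta>" "\<beta> < 1"
    and P: "prob_space P"
    and indep: "prob_space.indep_vars P (\<lambda>_. count_space UNIV) I UNIV"
    and distr: "\<forall>k i. measure P {\<omega> \<in> space P. I k \<omega> = i} = (norm (A $ i))^2 / (frobenius_norm A)^2"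
  shows "\<forall>k. prob_space.expectation P
             (\<lambda>\<omega>. inner (fst (kacz_mom A b M \<beta> x0 (\<lambda>j. I j \<omega>) (Suc k)) - x) (V l))
           = (1 - \<eta> / (1 - sqrt M))^k * (1 + \<eta> * (sqrt M * real (k+1) - 1) / (1 - sqrt M))
             * inner (x0 - x) (V l)"
proof -
  interpret iid_indices P I "\<lambda>i. (norm (A $ i))^2 / (frobenius_norm A)^2"
    by (intro iid_indices.intro iid_indices_axioms.intro P) (use indep distr in simp_all)
  define U where "U k = expectation (\<lambda>\<omega>. inner (fst (kacz_mom A b M \<beta> x0 (\<lambda>j. I j \<omega>) k) - x) (V l))" for k
  define W where "W k = expectation (\<lambda>\<omega>. inner (snd (kacz_mom A b M \<beta> x0 (\<lambda>j. I j \<omega>) k)) (V l))" for k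
  have eigen: "(transpose A ** A) *v V l = (\<sigma> l)^2 *\<^sub>R V l"
    using svd l unfolding svd_right_def by blast
  have "U (Suc k) = (1 - \<eta>) * U k + (sqrt M)^2 * W k" for k
    using expectation_inner_fst_kacz_mom_Suc[where c = "(frobenius_norm A)^2", OF refl eigen] M(1)
    unfolding U_def W_def b_def eta by simp
  moreover have "W (Suc k) = \<beta> * W k + (1 - \<beta>) * (U (Suc k) - U k)" for k
    unfolding U_def W_def by (rule expectation_inner_snd_kacz_mom_Suc)
  moreover have "W 0 = 0"
    by (simp add: W_def)
  moreover note beta(1)
  moreover have "sqrt M \<noteq> 1"
    using beta by auto
  ultimately have "U (Suc k)
      = (1 - \<eta> / (1 - sqrt M))^k * (1 + \<eta> * (sqrt M * real (k + 1) - 1) / (1 - sqrt M)) * U 0" for k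
    by (rule momentum_recurrence_closed_form)
  then show ?thesis
    by (simp add: U_def prob_space)
qed

end
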